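(* Let $\mathcal S'$ be a finite state space, let $\mathcal A(s)$ be a finite nonempty action set for each $s\in\mathcal S'$, let $\gamma\in(0,1)$, and let $r:\{(s,a):s\in\mathcal S',a\in\mathcal A(s)\}\to\mathbb R$ be a reward with $R_{\max}:=\sup_{s,a}|r(s,a)|<\infty$. Let $\mathcal B:=\{V:\mathcal S'\to\mathbb R \text{ bounded}\}$ with the supremum norm $\|\cdot\|_\infty$. Let $(\Omega,\mathcal F,\mathbb P)$ be a probability space with an increasing filtration $\{\mathcal F_t\}_{t\ge0}$. For each $t\ge 0$ let $\{U^t_{s,a}\}_{(s,a)}$ be a random $(s,a)$-rectangular family of nonempty ambiguity sets $U^t_{s,a}(\omega)\subseteq\Delta(\mathcal S')$ that is $\mathcal F_t$-measurable, and let $\mathcal T^t_{\mathrm{rob}}(\omega)$ be the induced robust Bellman operator $$(\mathcal T^t_{\mathrm{rob}}(\omega)V)(s)=\max_{a\in\mathcal A(s)}\ \min_{P(\cdot\mid s,a)\in U^t_{s,a}(\omega)}\Big\{r(s,a)+\gamma\sum_{s'\in\mathcal S'}P(s'\mid s,a)V(s')\Big\},$$ which is thus $\mathcal F_t$-measurable. Assume the standing assumptions (A1)–(A6) stated in the context. Suppose that, for $\mathbb P$-almost every $\omega\in\Omega$, there is an operator $\mathcal T_\infty(\omega)$ on $\mathcal B$ such that for every bounded set $B\subset\mathcal B$, $$\sup_{V\in B}\|\mathcal T^t_{\mathrm{rob}}(\omega)V-\mathcal T_\infty(\omega)V\|_\infty\longrightarrow 0\quad (t\to\infty).$$ Then $\mathcal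 T_\infty(\omega)$ is a $\gamma$-contraction on $(\mathcal B,\|\cdot\|_\infty)$, and there exists $\Omega_0\subseteq\Omega$ with $\mathbb P(\Omega_0)=1$ such that for every $\omega\in\Omega_0$ and every bounded initial value $V_0(\omega)\in\mathcal B$, the iteration $V_{t+1}(\omega)=\mathcal T^t_{\mathrm{rob}}(\omega)V_t(\omega)$ converges in $\|\cdot\|_\infty$ to the unique fixed point $V^\star(\omega)$ of $\mathcal T_\infty(\omega)$, i.e. $V_t(\omega)\to V^\star(\omega)$ and $\mathcal T_\infty(\omega)V^\star(\omega)=V^\star(\omega)$.
   Context: $\Delta(\mathcal S')$ denotes the probability simplex over $\mathcal S'$. A family of ambiguity sets is $(s,a)$-rectangular if the overall set of transition kernels is the Cartesian product $\prod_{(s,a)}U_{s,a}$, i.e. the next-state distribution is chosen independently for each state–action pair. Setting: there is a finite set of nodes $v$, a mapping $v(s,a)$ assigning each state–action pair to a node, a compact threat-parameter space $\Theta$, credible sets $U_v^t\subseteq\Theta$, and continuous maps $\phi_{s,a}:\Theta\to\Delta(\mathcal S')$ with $U^t_{s,a}=\phi_{s,a}(U^t_{v(s,a)})$. Standing assumptions: (A1) $\gamma\in(0,1)$ and per-step rewards (including any exposure penalty) are uniformly bounded and measurable. (A2) For any $(s,a)$-rectangular family of ambiguity sets, the robust Bellman operator above is a $\gamma$-contraction on $(\mathbb R^{|\mathcal S'|},\|\cdot\|_\infty)$. (A3) The Bayesian posterior of the node parameter $\theta_v$ given the data $\mathcal D_t$ observed up to time $t$ is well defined on the compact $\Theta$,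 and each credible set $U^t_v$ is Borel measurable. (A4) For each node $v$ there is a target $\theta_v^\star\in\Theta$ with $\mathbb P(\theta_v^\star\in U_v^t)\to1$ and $\sup_{\theta,\theta'\in U_v^t}\|\theta-\theta'\|_\infty\to0$ in probability, and there is a random finite time after which $U_v^{t+1}\subseteq U_v^t$ for all $t$. (A5) For every node $v$ and sensing action $a$, the maps $\theta\mapsto\mathbb E_{p(o\mid a,\theta)}[o]$ (expected observation) and $\theta\mapsto p_{\exp}(a,\theta)$ (exposure probability) are continuous on $\Theta$, with an integrable dominating function when the observation space is infinite. (A6) All action sets are finite and a fixed Borel-measurable tie-breaking rule is used for greedy action selection. *)

theory Defs
  imports "HOL-Probability.Probability"
begin

text \<open>Finite state space = finite type 's; value functions V :: 's => real
 (automatically bounded). Sup norm:\<close>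
definition supnorm :: "('s::finite \<Rightarrow> real) \<Rightarrow> real" where
  "supnorm V = Max (range (\<lambda>s. \<bar>V s\<bar>))"

definition prob_simplex :: "('s::finite \<Rightarrow> real) set" where
  "prob_simplex = {P. (\<forall>s. 0 \<le> P s) \<and> (\<Sum>s\<in>UNIV. P s) = 1}"

text \<open>Robust Bellman operator induced by an (s,a)-rectangular family Uf of ambiguity sets
 (Uf s a is the ambiguity set for the pair (s,a)); the inner min is an infimum.\<close>
definition rob_bellman ::
  "('s::finite \<Rightarrow> 'a set) \<Rightarrow> ('s \<Rightarrow> 'a \<Rightarrow> real) \<Rightarrow> real
   \<Rightarrow> ('s \<Rightarrow> 'a \<Rightarrow> ('s \<Rightarrow> real) set) \<Rightarrow> ('s \<Rightarrow> real) \<Rightarrow> ('s \<Rightarrow> real)" where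
  "rob_bellman A r \<gamma> Uf V = (\<lambda>s. Max ((\<lambda>a. INF P\<in>Uf s a. r s a + \<gamma> * (\<Sum>s'\<in>UNIV. P s' * V s')) ` A s))"

definition is_contraction :: "real \<Rightarrow> (('s::finite \<Rightarrow> real) \<Rightarrow> ('s \<Rightarrow> real)) \<Rightarrow> bool" where
  "is_contraction \<gamma> T \<longleftrightarrow> (\<forall>V W. supnorm (\<lambda>s. T V s - T W s) \<le> \<gamma> * supnorm (\<lambda>s. V s - W s))"

definition bounded_fs :: "('s::finite \<Rightarrow> real) set \<Rightarrow> bool" where
  "bounded_fs B \<longleftrightarrow> (\<exists>C. \<forall>V\<in>B. supnorm V \<le> C)"

end

theory Submission
  imports Defs
begin

text \<open>
For almost every \<open>\<omega>\<close> all operators \<open>T\<^sup>t(\<omega>)\<close> are \<open>\<gamma>\<close>-contractions by (A2). The contraction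
inequality survives the pointwise limit, so \<open>T\<^sub>\<infinity>(\<omega>)\<close> is a \<open>\<gamma>\<close>-contraction of the complete
space \<open>(\<real>\<^sup>S, \<parallel>\<cdot>\<parallel>\<^sub>\<infinity>)\<close> and has a unique fixed point \<open>V\<^sup>\<star>\<close> (Banach). The error
\<open>e\<^sub>t = \<parallel>V\<^sub>t - V\<^sup>\<star>\<parallel>\<^sub>\<infinity>\<close> then obeys \<open>e\<^sub>t\<^sub>+\<^sub>1 \<le> \<gamma> e\<^sub>t + \<parallel>T\<^sup>t V\<^sup>\<star> - T\<^sub>\<infinity> V\<^sup>\<star>\<parallel>\<^sub>\<infinity>\<close>, a contracting
recursion with vanishing perturbation, hence \<open>e\<^sub>t \<rightarrow> 0\<close>. The argument is pathwise and only uses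
convergence on singletons \<open>B = {V}\<close>.
\<close>

abbreviation supdist :: "('s::finite \<Rightarrow> real) \<Rightarrow> ('s \<Rightarrow> real) \<Rightarrow> real" where
  "supdist V W \<equiv> supnorm (\<lambda>s. V s - W s)"

lemma abs_le_supnorm: "\<bar>V s\<bar> \<le> supnorm V"
  unfolding supnorm_def by (rule Max_ge) auto

lemma supnorm_nonneg: "0 \<le> supnorm V"
  using abs_le_supnorm[of V] abs_ge_zero order_trans by blast

lemma supnorm_leI: "(\<And>s. \<bar>V s\<bar> \<le> c) \<Longrightarrow> supnorm V \<le> c"
  unfolding supnorm_def by (subst Max_le_iff) auto

lemma supdist_commute: "supdist V W = supdist W V"
  by (simp add: abs_minus_commute supnorm_def)

lemma supdist_triangle: "supdist U W \<le> supdist U V + supdist V W"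
proof (rule supnorm_leI)
  fix s
  show "\<bar>U s - W s\<bar> \<le> supdist U V + supdist V W"
    using abs_le_supnorm[of "\<lambda>s. U s - V s" s] abs_le_supnorm[of "\<lambda>s. V s - W s" s] by linarith
qed

lemma supdist_eq_0_iff: "supdist V W = 0 \<longleftrightarrow> V = W"
proof
  assume "supdist V W = 0"
  then show "V = W"
    using abs_le_supnorm[of "\<lambda>s. V s - W s"] by (simp add: fun_eq_iff)
qed (simp add: supnorm_def)

interpretation supdist: Metric_space "UNIV :: ('s::finite \<Rightarrow> real) set" supdist
  by unfold_locales (auto simp: supnorm_nonneg supdist_eq_0_iff supdist_triangle intro: supdist_commute)

lemma supdist_tendsto_zeroI:
  assumes "\<And>s. (\<lambda>n. X n s) \<longlonglongrightarrow> L s"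
  shows "(\<lambda>n. supdist (X n) L) \<longlonglongrightarrow> 0"
proof (rule tendsto_sandwich)
  show "\<forall>\<^sub>F n in sequentially. 0 \<le> supdist (X n) L"
    by (simp add: supnorm_nonneg)
  show "\<forall>\<^sub>F n in sequentially. supdist (X n) L \<le> (\<Sum>s\<in>UNIV. \<bar>X n s - L s\<bar>)"
    by (intro always_eventually allI supnorm_leI member_le_sum) auto
  have "(\<lambda>n. \<Sum>s\<in>UNIV. \<bar>X n s - L s\<bar>) \<longlonglongrightarrow> (\<Sum>s\<in>UNIV. \<bar>L s - L s\<bar>)"
    by (intro tendsto_intros assms)
  then show "(\<lambda>n. \<Sum>s\<in>UNIV. \<bar>X n s - L s\<bar>) \<longlonglongrightarrow> 0"
    by simp
qed simp

lemma supdist_mcomplete: "Metric_space.mcomplete (UNIV :: ('s::finite \<Rightarrow> real) set) supdist"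
  unfolding supdist.mcomplete_def
proof (intro allI impI)
  fix \<sigma> :: "nat \<Rightarrow> 's::finite \<Rightarrow> real"
  assume "supdist.MCauchy \<sigma>"
  then have "Cauchy (\<lambda>n. \<sigma> n s)" for s
    unfolding supdist.MCauchy_def Cauchy_def dist_real_def
    by (meson abs_le_supnorm le_less_trans)
  then have "(\<lambda>n. \<sigma> n s) \<longlonglongrightarrow> lim (\<lambda>n. \<sigma> n s)" for s
    by (simp add: Cauchy_convergent_iff convergent_LIMSEQ_iff)
  then have "(\<lambda>n. supdist (\<sigma> n) (\<lambda>s. lim (\<lambda>n. \<sigma> n s))) \<longlonglongrightarrow> 0"
    by (rule supdist_tendsto_zeroI)
  then show "\<exists>L. limitin supdist.mtopology \<sigma> L sequentially"
    by (auto simp: supdist.limitin_metric_dist_null)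
qed

lemma contraction_ex1_fixpoint:
  assumes "is_contraction \<gamma> T" "\<gamma> < 1"
  shows "\<exists>!V. T V = V"
proof -
  have lip: "supdist (T V) (T W) \<le> \<gamma> * supdist V W" for V W
    using assms(1) unfolding is_contraction_def by blast
  obtain V where "T V = V"
    using supdist.Banach_fixedpoint_thm[OF supdist_mcomplete _ _ \<open>\<gamma> < 1\<close> lip] by blast
  moreover have "W = V" if "T W = W" for W
    using supdist.contraction_imp_unique_fixpoint[OF that \<open>T V = V\<close> _ \<open>\<gamma> < 1\<close> lip] by blast
  ultimately show ?thesis by blast
qed

lemma contraction_pointwise_limit:
  assumes contr: "\<And>t. is_contraction \<gamma> (T t)"
    and lim: "\<And>V. (\<lambda>t. supdist (T t V) (T_lim V)) \<longlonglongrightarrow> 0"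
  shows "is_contraction \<gamma> T_lim"
  unfolding is_contraction_def
proof (intro allI)
  fix V W
  have "supdist (T_lim V) (T_lim W) \<le> supdist (T t V) (T_lim V) + \<gamma> * supdist V W + supdist (T t W) (T_lim W)"
    for t
  proof -
    have "supdist (T_lim V) (T_lim W)
        \<le> supdist (T_lim V) (T t V) + supdist (T t V) (T t W) + supdist (T t W) (T_lim W)"
      using supdist_triangle[of "T_lim V" "T_lim W" "T t V"] supdist_triangle[of "T t V" "T_lim W" "T t W"]
      by linarith
    moreover have "supdist (T t V) (T t W) \<le> \<gamma> * supdist V W"
      using contr unfolding is_contraction_def by blast
    ultimately show ?thesis
      using supdist_commute[of "T_lim V" "T t V"] by linarith
  qed
  moreover have "(\<lambda>t. supdist (T t V) (T_lim V) + \<gamma> * supdist V W + supdist (T t W) (T_lim W))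
      \<longlonglongrightarrow> 0 + \<gamma> * supdist V W + 0"
    by (intro tendsto_add tendsto_const lim)
  ultimately show "supdist (T_lim V) (T_lim W) \<le> \<gamma> * supdist V W"
    by (intro LIMSEQ_le_const) auto
qed

lemma perturbed_contraction_tendsto_zero:
  fixes e \<delta> :: "nat \<Rightarrow> real"
  assumes step: "\<And>t. e (Suc t) \<le> \<gamma> * e t + \<delta> t" and "\<delta> \<longlonglongrightarrow> 0"
    and "0 \<le> \<gamma>" "\<gamma> < 1" and e_nonneg: "\<And>t. 0 \<le> e t"
  shows "e \<longlonglongrightarrow> 0"
proof (rule LIMSEQ_I)
  fix \<epsilon> :: real
  assume "0 < \<epsilon>"
  with \<open>\<gamma> < 1\<close> obtain t\<^sub>0 where \<delta>_small: "\<And>t. t \<ge> t\<^sub>0 \<Longrightarrow> \<delta> t \<le> \<epsilon> / 2 * (1 - \<gamma>)"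
    using LIMSEQ_D[OF \<open>\<delta> \<longlonglongrightarrow> 0\<close>, of "\<epsilon> / 2 * (1 - \<gamma>)"] by fastforce
  have unrolled: "e (t\<^sub>0 + k) \<le> \<gamma> ^ k * e t\<^sub>0 + \<epsilon> / 2" for k
  proof (induction k)
    case 0
    then show ?case using \<open>0 < \<epsilon>\<close> by simp
  next
    case (Suc k)
    have "e (t\<^sub>0 + Suc k) \<le> \<gamma> * e (t\<^sub>0 + k) + \<delta> (t\<^sub>0 + k)"
      using step by simp
    also have "\<dots> \<le> \<gamma> * (\<gamma> ^ k * e t\<^sub>0 + \<epsilon> / 2) + \<epsilon> / 2 * (1 - \<gamma>)"
      using Suc.IH \<delta>_small[of "t\<^sub>0 + k"] \<open>0 \<le> \<gamma>\<close> by (intro add_mono mult_left_mono) auto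
    also have "\<dots> = \<gamma> ^ Suc k * e t\<^sub>0 + \<epsilon> / 2"
      by (simp add: field_simps)
    finally show ?case .
  qed
  have "(\<lambda>k. \<gamma> ^ k * e t\<^sub>0) \<longlonglongrightarrow> 0"
    using \<open>0 \<le> \<gamma>\<close> \<open>\<gamma> < 1\<close> by (intro tendsto_mult_left_zero LIMSEQ_power_zero) auto
  with \<open>0 < \<epsilon>\<close> obtain k\<^sub>0 where k\<^sub>0: "\<And>k. k \<ge> k\<^sub>0 \<Longrightarrow> \<gamma> ^ k * e t\<^sub>0 < \<epsilon> / 2"
    using LIMSEQ_D[of _ 0 "\<epsilon> / 2"] by fastforce
  have "\<bar>e n\<bar> < \<epsilon>" if "n \<ge> t\<^sub>0 + k\<^sub>0" for n
  proof -
    have "e n \<le> \<gamma> ^ (n - t\<^sub>0) * e t\<^sub>0 + \<epsilon> / 2"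
      using unrolled[of "n - t\<^sub>0"] that by simp
    moreover have "\<gamma> ^ (n - t\<^sub>0) * e t\<^sub>0 < \<epsilon> / 2"
      using k\<^sub>0 that by simp
    ultimately show ?thesis
      using e_nonneg[of n] by simp
  qed
  then show "\<exists>n\<^sub>0. \<forall>n\<ge>n\<^sub>0. norm (e n - 0) < \<epsilon>"
    by auto
qed

lemma iteration_tendsto_fixpoint:
  assumes contr: "\<And>t. is_contraction \<gamma> (T t)" and "0 \<le> \<gamma>" "\<gamma> < 1"
    and fix_lim: "(\<lambda>t. supdist (T t Vstar) Vstar) \<longlonglongrightarrow> 0"
    and iter: "\<And>t. Vs (Suc t) = T t (Vs t)"
  shows "(\<lambda>t. supdist (Vs t) Vstar) \<longlonglongrightarrow> 0"
proof (rule perturbed_contraction_tendsto_zero[OF _ fix_lim \<open>0 \<le> \<gamma>\<close> \<open>\<gamma> < 1\<close> supnorm_nonneg])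
  fix t
  have "supdist (T t (Vs t)) Vstar \<le> supdist (T t (Vs t)) (T t Vstar) + supdist (T t Vstar) Vstar"
    by (rule supdist_triangle)
  also have "\<dots> \<le> \<gamma> * supdist (Vs t) Vstar + supdist (T t Vstar) Vstar"
    using contr unfolding is_contraction_def by (intro add_right_mono) blast
  finally show "supdist (Vs (Suc t)) Vstar \<le> \<gamma> * supdist (Vs t) Vstar + supdist (T t Vstar) Vstar"
    by (simp add: iter)
qed

lemma bounded_fs_singleton: "bounded_fs {V}"
  unfolding bounded_fs_def by blast

lemma uniform_on_bounded_imp_pointwise:
  assumes "\<forall>B. bounded_fs B \<longrightarrow> (\<forall>\<epsilon>>0. \<exists>t\<^sub>0. \<forall>t\<ge>t\<^sub>0. \<forall>V\<in>B. supdist (T t V) (T_lim V) \<le> \<epsilon>)"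
  shows "(\<lambda>t. supdist (T t V) (T_lim V)) \<longlonglongrightarrow> 0"
proof (rule LIMSEQ_I)
  fix \<epsilon> :: real
  assume "0 < \<epsilon>"
  then obtain t\<^sub>0 where t\<^sub>0: "\<And>t. t \<ge> t\<^sub>0 \<Longrightarrow> supdist (T t V) (T_lim V) \<le> \<epsilon> / 2"
    using assms bounded_fs_singleton[of V] by (metis half_gt_zero singletonI)
  have "norm (supdist (T t V) (T_lim V) - 0) < \<epsilon>" if "t \<ge> t\<^sub>0" for t
    using t\<^sub>0[OF that] \<open>0 < \<epsilon>\<close> by (simp add: supnorm_nonneg)
  then show "\<exists>t\<^sub>0. \<forall>t\<ge>t\<^sub>0. norm (supdist (T t V) (T_lim V) - 0) < \<epsilon>"
    by blast
qed

lemma iteration_of_converging_contractions: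
  assumes "0 \<le> \<gamma>" "\<gamma> < 1" and contr: "\<And>t. is_contraction \<gamma> (T t)"
    and lim: "\<And>V. (\<lambda>t. supdist (T t V) (T_lim V)) \<longlonglongrightarrow> 0"
  shows "is_contraction \<gamma> T_lim \<and>
         (\<exists>Vstar. T_lim Vstar = Vstar \<and> (\<forall>W. T_lim W = W \<longrightarrow> W = Vstar) \<and>
            (\<forall>Vs. (\<forall>t. Vs (Suc t) = T t (Vs t)) \<longrightarrow> (\<lambda>t. supdist (Vs t) Vstar) \<longlonglongrightarrow> 0))"
proof -
  have "is_contraction \<gamma> T_lim"
    using contr lim by (rule contraction_pointwise_limit)
  then obtain Vstar where fixed: "T_lim Vstar = Vstar" and unique: "\<forall>W. T_lim W = W \<longrightarrow> W = Vstar"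
    using contraction_ex1_fixpoint[OF _ \<open>\<gamma> < 1\<close>] by blast
  have "(\<lambda>t. supdist (Vs t) Vstar) \<longlonglongrightarrow> 0" if "\<forall>t. Vs (Suc t) = T t (Vs t)" for Vs
  proof (rule iteration_tendsto_fixpoint[OF contr \<open>0 \<le> \<gamma>\<close> \<open>\<gamma> < 1\<close>])
    show "(\<lambda>t. supdist (T t Vstar) Vstar) \<longlonglongrightarrow> 0"
      using lim[of Vstar] by (simp only: fixed)
  qed (use that in blast)
  with \<open>is_contraction \<gamma> T_lim\<close> fixed unique show ?thesis
    by blast
qed

lemma (in prob_space) AE_conj_imp_full_set:
  assumes "AE \<omega> in M. P \<omega> \<and> Q \<omega>"
  shows "(AE \<omega> in M. P \<omega>) \<and> (\<exists>\<Omega>\<^sub>0\<in>events. prob \<Omega>\<^sub>0 = 1 \<and> (\<forall>\<omega>\<in>\<Omega>\<^sub>0. Q \<omega>))"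
proof
  show "AE \<omega> in M. P \<omega>"
    using assms by (rule AE_mp) simp
  obtain \<Omega>\<^sub>0 where "\<Omega>\<^sub>0 \<subseteq> {\<omega> \<in> space M. P \<omega> \<and> Q \<omega>}" "\<Omega>\<^sub>0 \<in> events" "prob \<Omega>\<^sub>0 = 1"
    using assms by (rule AE_E_prob)
  then show "\<exists>\<Omega>\<^sub>0\<in>events. prob \<Omega>\<^sub>0 = 1 \<and> (\<forall>\<omega>\<in>\<Omega>\<^sub>0. Q \<omega>)"
    by blast
qed

theorem theorem1:
  fixes M :: "'w measure"
    and F :: "nat \<Rightarrow> 'w measure"
    and A :: "'s::finite \<Rightarrow> 'a set"
    and r :: "'s \<Rightarrow> 'a \<Rightarrow> real"
    and \<gamma> :: real
    and U :: "nat \<Rightarrow> 'w \<Rightarrow> 's \<Rightarrow> 'a \<Rightarrow> ('s \<Rightarrow> real) set"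
    and Tinf :: "'w \<Rightarrow> ('s \<Rightarrow> real) \<Rightarrow> ('s \<Rightarrow> real)"
  assumes prob: "prob_space M"
    and filt: "filtration (space M) F"
    and filt_sub: "\<And>t. sets (F t) \<subseteq> sets M"
    and A_fin: "\<And>s. finite (A s)"
    and A_ne: "\<And>s. A s \<noteq> {}"
    and gamma: "0 < \<gamma>" "\<gamma> < 1"
    and U_ne: "\<And>t \<omega> s a. \<omega> \<in> space M \<Longrightarrow> a \<in> A s \<Longrightarrow> U t \<omega> s a \<noteq> {}"
    and U_simplex: "\<And>t \<omega> s a. \<omega> \<in> space M \<Longrightarrow> a \<in> A s \<Longrightarrow> U t \<omega> s a \<subseteq> prob_simplex"
    and U_meas: "\<And>t V s. (\<lambda>\<omega>. rob_bellman A r \<gamma> (U t \<omega>) V s) \<in> borel_measurable (F t)"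
    and A2: "\<And>Uf. (\<And>s a. a \<in> A s \<Longrightarrow> Uf s a \<noteq> {} \<and> Uf s a \<subseteq> prob_simplex)
               \<Longrightarrow> is_contraction \<gamma> (rob_bellman A r \<gamma> Uf)"
    and conv: "AE \<omega> in M. \<forall>B. bounded_fs B \<longrightarrow>
                 (\<forall>\<epsilon>>0. \<exists>t0. \<forall>t\<ge>t0. \<forall>V\<in>B.
                    supnorm (\<lambda>s. rob_bellman A r \<gamma> (U t \<omega>) V s - Tinf \<omega> V s) \<le> \<epsilon>)"
  shows "(AE \<omega> in M. is_contraction \<gamma> (Tinf \<omega>)) \<and>
         (\<exists>\<Omega>0 \<in> sets M. measure M \<Omega>0 = 1 \<and>
            (\<forall>\<omega>\<in>\<Omega>0. \<exists>Vstar. Tinf \<omega> Vstar = Vstar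
                 \<and> (\<forall>W. Tinf \<omega> W = W \<longrightarrow> W = Vstar)
                 \<and> (\<forall>Vs :: nat \<Rightarrow> 's \<Rightarrow> real.
                      (\<forall>t. Vs (Suc t) = rob_bellman A r \<gamma> (U t \<omega>) (Vs t)) \<longrightarrow>
                      (\<lambda>t. supnorm (\<lambda>s. Vs t s - Vstar s)) \<longlonglongrightarrow> 0)))"
proof -
  interpret prob_space M
    by (rule prob)
  have pathwise: "is_contraction \<gamma> (Tinf \<omega>) \<and>
      (\<exists>Vstar. Tinf \<omega> Vstar = Vstar \<and> (\<forall>W. Tinf \<omega> W = W \<longrightarrow> W = Vstar) \<and>
         (\<forall>Vs. (\<forall>t. Vs (Suc t) = rob_bellman A r \<gamma> (U t \<omega>) (Vs t)) \<longrightarrow>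
            (\<lambda>t. supdist (Vs t) Vstar) \<longlonglongrightarrow> 0))"
    if "\<omega> \<in> space M"
      and conv_\<omega>: "\<forall>B. bounded_fs B \<longrightarrow> (\<forall>\<epsilon>>0. \<exists>t0. \<forall>t\<ge>t0. \<forall>V\<in>B.
                    supdist (rob_bellman A r \<gamma> (U t \<omega>) V) (Tinf \<omega> V) \<le> \<epsilon>)"
    for \<omega>
  proof (rule iteration_of_converging_contractions)
    show "0 \<le> \<gamma>" "\<gamma> < 1"
      using gamma by simp_all
    show "is_contraction \<gamma> (rob_bellman A r \<gamma> (U t \<omega>))" for t
      using U_ne U_simplex \<open>\<omega> \<in> space M\<close> by (intro A2) auto
    show "(\<lambda>t. supdist (rob_bellman A r \<gamma> (U t \<omega>) V) (Tinf \<omega> V)) \<longlonglongrightarrow> 0" for V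
      using conv_\<omega> by (rule uniform_on_bounded_imp_pointwise)
  qed
  show ?thesis
    by (rule AE_conj_imp_full_set, rule AE_mp[OF conv]) (intro AE_I2 impI pathwise)
qed

end
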